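(* Consider the binary integer program \[\text{(P)}\qquad\min_{x\in\{0,1\}^n}\ \langle x,Qx\rangle+\langle c,x\rangle\quad\text{s.t. } Ax\ge b,\ Bx=d,\] with $Q\in\mathbb R^{n\times n}$ symmetric, $c\in\mathbb R^n$, $A\in\mathbb R^{m_1\times n}$, $b\in\mathbb R^{m_1}$, $B\in\mathbb R^{m_2\times n}$, $d\in\mathbb R^{m_2}$. Let $J\subseteq[m_2]$ be a row index set and $I\subseteq[n]$ a column index set, with complements $\bar J$, $\bar I$, such that $B_J$ and $d_J$ are integral, $B_J$ is totally unimodular, and $B_{JI}$ is invertible. Define $s:=B_{JI}^{-1}d_J$ and $S:=-B_{JI}^{-1}B_{J\bar I}$, and \[Q':=S^\top Q_{II}S+S^\top Q_{I\bar I}+Q_{I\bar I}^\top S+Q_{\bar I\bar I},\quad A':=A_{\cdot I}S+A_{\cdot\bar I},\quad B':=B_{\bar JI}S+B_{\bar J\bar I},\quad b':=b-A_{\cdot I}s,\] \[c':=2S^\top Q_{II}s+2Q_{I\bar I}^\top s+S^\top c_I+c_{\bar I},\quad d':=d_{\bar J}-B_{\bar JI}s,\quad c_0':=\langle s,Q_{II}s\rangle+\langle c_I,s\rangle.\] Then the problem \[\text{(P')}\qquad\min_{x_{\bar I}\in\{0,1\}^{n-|I|}}\ \langle x_{\bar I},Q'x_{\bar I}\rangle+\langle c',x_{\bar I}\rangle+c_0'\quad\text{s.t. } A'x_{\bar I}\ge b',\ B'x_{\bar I}=d',\ Sx_{\bar I}\ge-s,\ Sx_{\bar I}\le\mathbf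 1-s\] is an exact reformulation of (P): the map $x_{\bar I}\mapsto x$ with $x_I:=s+Sx_{\bar I}$ is a bijection from the feasible set of (P') onto the feasible set of (P) that preserves objective values; in particular (P) and (P') have the same optimal value and optimal solutions correspond under this map.
   Context: For index sets, $B_J$ denotes the rows of $B$ indexed by $J$, $B_{JI}$ the submatrix with rows $J$ and columns $I$, $A_{\cdot I}$ the columns of $A$ indexed by $I$, $Q_{II},Q_{I\bar I},Q_{\bar I\bar I}$ the corresponding blocks of $Q$, and $x_I$, $c_I$, $d_J$ the subvectors. A matrix is totally unimodular if every square submatrix has determinant in $\{-1,0,1\}$. $\mathbf 1$ is the all-ones vector; $[m]=\{1,\dots,m\}$. *)

theory Defs
  imports Complex_Main "Jordan_Normal_Form.Determinant"
begin

text \<open>Matrices are functions row-index \<Rightarrow> column-index \<Rightarrow> real, restricted to explicit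
  finite carrier sets of rows and columns; vectors are functions index \<Rightarrow> real.\<close>

definition is_inverse_on :: "'r set \<Rightarrow> 'c set \<Rightarrow> ('r \<Rightarrow> 'c \<Rightarrow> real) \<Rightarrow> ('c \<Rightarrow> 'r \<Rightarrow> real) \<Rightarrow> bool" where
  "is_inverse_on R C M Minv \<longleftrightarrow>
     (\<forall>r\<in>R. \<forall>r'\<in>R. (\<Sum>k\<in>C. M r k * Minv k r') = (if r = r' then 1 else 0)) \<and>
     (\<forall>k\<in>C. \<forall>k'\<in>C. (\<Sum>r\<in>R. Minv k r * M r k') = (if k = k' then 1 else 0))"

definition invertible_on :: "'r set \<Rightarrow> 'c set \<Rightarrow> ('r \<Rightarrow> 'c \<Rightarrow> real) \<Rightarrow> bool" where
  "invertible_on R C M \<longleftrightarrow> (\<exists>Minv. is_inverse_on R C M Minv)"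

definition inverse_on :: "'r set \<Rightarrow> 'c set \<Rightarrow> ('r \<Rightarrow> 'c \<Rightarrow> real) \<Rightarrow> ('c \<Rightarrow> 'r \<Rightarrow> real)" where
  "inverse_on R C M = (SOME Minv. is_inverse_on R C M Minv)"

definition totally_unimodular_on :: "'r set \<Rightarrow> 'c set \<Rightarrow> ('r \<Rightarrow> 'c \<Rightarrow> real) \<Rightarrow> bool" where
  "totally_unimodular_on R C M \<longleftrightarrow>
     (\<forall>k rs cs. length rs = k \<and> length cs = k \<and> distinct rs \<and> distinct cs \<and>
        set rs \<subseteq> R \<and> set cs \<subseteq> C \<longrightarrow>
        det (mat k k (\<lambda>(a, b). M (rs ! a) (cs ! b))) \<in> {-1, 0, 1})"

text \<open>Throughout: I column index set, J row index set of B; Ib = N - I, Jb = M2 - J.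
  Binv = B_{JI}^{-1}, indexed I \<times> J.\<close>

definition red_s :: "'r2 set \<Rightarrow> 'c set \<Rightarrow> ('r2 \<Rightarrow> 'c \<Rightarrow> real) \<Rightarrow> ('r2 \<Rightarrow> real) \<Rightarrow> 'c \<Rightarrow> real" where
  "red_s J I B d = (\<lambda>i. \<Sum>j\<in>J. inverse_on J I B i j * d j)"

definition red_S :: "'r2 set \<Rightarrow> 'c set \<Rightarrow> ('r2 \<Rightarrow> 'c \<Rightarrow> real) \<Rightarrow> 'c \<Rightarrow> 'c \<Rightarrow> real" where
  "red_S J I B = (\<lambda>i k. - (\<Sum>j\<in>J. inverse_on J I B i j * B j k))"

definition red_Q :: "'c set \<Rightarrow> ('c \<Rightarrow> 'c \<Rightarrow> real) \<Rightarrow> ('c \<Rightarrow> 'c \<Rightarrow> real) \<Rightarrow> 'c \<Rightarrow> 'c \<Rightarrow> real" where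
  "red_Q I S Q = (\<lambda>k l. (\<Sum>i\<in>I. \<Sum>i'\<in>I. S i k * Q i i' * S i' l)
                      + (\<Sum>i\<in>I. S i k * Q i l) + (\<Sum>i\<in>I. Q i k * S i l) + Q k l)"

definition red_A :: "'c set \<Rightarrow> ('c \<Rightarrow> 'c \<Rightarrow> real) \<Rightarrow> ('r \<Rightarrow> 'c \<Rightarrow> real) \<Rightarrow> 'r \<Rightarrow> 'c \<Rightarrow> real" where
  "red_A I S A = (\<lambda>r k. (\<Sum>i\<in>I. A r i * S i k) + A r k)"

definition red_b :: "'c set \<Rightarrow> ('c \<Rightarrow> real) \<Rightarrow> ('r \<Rightarrow> 'c \<Rightarrow> real) \<Rightarrow> ('r \<Rightarrow> real) \<Rightarrow> 'r \<Rightarrow> real" where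
  "red_b I s A b = (\<lambda>r. b r - (\<Sum>i\<in>I. A r i * s i))"

definition red_c :: "'c set \<Rightarrow> ('c \<Rightarrow> real) \<Rightarrow> ('c \<Rightarrow> 'c \<Rightarrow> real) \<Rightarrow> ('c \<Rightarrow> 'c \<Rightarrow> real) \<Rightarrow> ('c \<Rightarrow> real) \<Rightarrow> 'c \<Rightarrow> real" where
  "red_c I s S Q c = (\<lambda>k. 2 * (\<Sum>i\<in>I. \<Sum>i'\<in>I. S i k * Q i i' * s i')
                   + 2 * (\<Sum>i\<in>I. Q i k * s i) + (\<Sum>i\<in>I. S i k * c i) + c k)"

definition red_c0 :: "'c set \<Rightarrow> ('c \<Rightarrow> real) \<Rightarrow> ('c \<Rightarrow> 'c \<Rightarrow> real) \<Rightarrow> ('c \<Rightarrow> real) \<Rightarrow> real" where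
  "red_c0 I s Q c = (\<Sum>i\<in>I. \<Sum>i'\<in>I. s i * Q i i' * s i') + (\<Sum>i\<in>I. c i * s i)"

text \<open>Vectors x \<in> {0,1}^N are functions 'c \<Rightarrow> real that are 0/1 on N and 0 outside N.\<close>

definition objP :: "'c set \<Rightarrow> ('c \<Rightarrow> 'c \<Rightarrow> real) \<Rightarrow> ('c \<Rightarrow> real) \<Rightarrow> ('c \<Rightarrow> real) \<Rightarrow> real" where
  "objP N Q c x = (\<Sum>i\<in>N. \<Sum>j\<in>N. x i * Q i j * x j) + (\<Sum>i\<in>N. c i * x i)"

definition feasP :: "'c set \<Rightarrow> 'r1 set \<Rightarrow> 'r2 set \<Rightarrow> ('r1 \<Rightarrow> 'c \<Rightarrow> real) \<Rightarrow> ('r1 \<Rightarrow> real)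
     \<Rightarrow> ('r2 \<Rightarrow> 'c \<Rightarrow> real) \<Rightarrow> ('r2 \<Rightarrow> real) \<Rightarrow> ('c \<Rightarrow> real) set" where
  "feasP N M1 M2 A b B d = {x. (\<forall>i\<in>N. x i \<in> {0, 1}) \<and> (\<forall>i. i \<notin> N \<longrightarrow> x i = 0)
               \<and> (\<forall>r\<in>M1. (\<Sum>i\<in>N. A r i * x i) \<ge> b r)
               \<and> (\<forall>r\<in>M2. (\<Sum>i\<in>N. B r i * x i) = d r)}"

definition objP' :: "'c set \<Rightarrow> ('c \<Rightarrow> 'c \<Rightarrow> real) \<Rightarrow> ('c \<Rightarrow> real) \<Rightarrow> real \<Rightarrow> ('c \<Rightarrow> real) \<Rightarrow> real" where
  "objP' Ib Q' c' c0 y = (\<Sum>k\<in>Ib. \<Sum>l\<in>Ib. y k * Q' k l * y l) + (\<Sum>k\<in>Ib. c' k * y k) + c0"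

definition feasP' :: "'c set \<Rightarrow> 'c set \<Rightarrow> 'r1 set \<Rightarrow> 'r2 set \<Rightarrow> ('r1 \<Rightarrow> 'c \<Rightarrow> real) \<Rightarrow> ('r1 \<Rightarrow> real)
     \<Rightarrow> ('r2 \<Rightarrow> 'c \<Rightarrow> real) \<Rightarrow> ('r2 \<Rightarrow> real) \<Rightarrow> ('c \<Rightarrow> 'c \<Rightarrow> real) \<Rightarrow> ('c \<Rightarrow> real) \<Rightarrow> ('c \<Rightarrow> real) set" where
  "feasP' Ib I M1 Jb A' b' B' d' S s = {y. (\<forall>k\<in>Ib. y k \<in> {0, 1}) \<and> (\<forall>k. k \<notin> Ib \<longrightarrow> y k = 0)
               \<and> (\<forall>r\<in>M1. (\<Sum>k\<in>Ib. A' r k * y k) \<ge> b' r)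
               \<and> (\<forall>r\<in>Jb. (\<Sum>k\<in>Ib. B' r k * y k) = d' r)
               \<and> (\<forall>i\<in>I. (\<Sum>k\<in>Ib. S i k * y k) \<ge> - s i)
               \<and> (\<forall>i\<in>I. (\<Sum>k\<in>Ib. S i k * y k) \<le> 1 - s i)}"

definition lift :: "'c set \<Rightarrow> 'c set \<Rightarrow> ('c \<Rightarrow> real) \<Rightarrow> ('c \<Rightarrow> 'c \<Rightarrow> real) \<Rightarrow> ('c \<Rightarrow> real) \<Rightarrow> 'c \<Rightarrow> real" where
  "lift I Ib s S y = (\<lambda>i. if i \<in> I then s i + (\<Sum>k\<in>Ib. S i k * y k) else y i)"

end

theory Submission
  imports Defs
begin

text \<open>Since \<open>B\<^sub>J\<^sub>I\<close> is invertible, the rows \<open>J\<close> of \<open>Bx = d\<close> hold exactly when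
  \<open>x\<^sub>I = s + S x\<^sub>I\<^sub>b\<close>, so feasible points of (P) are the lifts of vectors \<open>x\<^sub>I\<^sub>b\<close>;
  substituting the lift into the objective and into the remaining constraints yields the data
  of (P'). The lifted coordinates \<open>x\<^sub>I\<close> are binary as soon as they lie in \<open>[0, 1]\<close>,
  because \<open>s\<close> and \<open>S\<close> are integral: \<open>B\<^sub>J\<^sub>I\<close> is a square submatrix of the totally
  unimodular integral matrix \<open>B\<^sub>J\<close>, hence has determinant \<open>\<plusminus>1\<close>, and its inverse is its
  adjugate up to sign.\<close>

lemma Ints_det:
  fixes A :: "real mat"
  assumes "\<And>i j. i < dim_row A \<Longrightarrow> j < dim_col A \<Longrightarrow> A $$ (i, j) \<in> \<int>"
  shows "det A \<in> \<int>"
proof (cases "dim_row A = dim_col A")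
  case True
  have "p i \<in> {0..<dim_col A}" if "p permutes {0..<dim_row A}" "i < dim_row A" for p i
    using that True by (simp add: permutes_in_image)
  then show ?thesis
    unfolding det_def if_P[OF True]
    by (intro Ints_sum Ints_mult Ints_prod) (auto intro!: assms)
qed (simp add: det_def)

lemma Ints_adj_mat:
  fixes A :: "real mat"
  assumes "\<And>i j. i < dim_row A \<Longrightarrow> j < dim_col A \<Longrightarrow> A $$ (i, j) \<in> \<int>"
    and "i < dim_row A" "j < dim_col A"
  shows "adj_mat A $$ (i, j) \<in> \<int>"
  using assms(2,3) unfolding adj_mat_def cofactor_def
  by (auto simp: mat_delete_def intro!: Ints_mult Ints_power Ints_det assms(1))

lemma Ints_inverse_mat:
  fixes A B :: "real mat"
  assumes A: "A \<in> carrier_mat n n" and B: "B \<in> carrier_mat n n" and AB: "A * B = 1\<^sub>m n"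
    and A_Ints: "\<And>i j. i < n \<Longrightarrow> j < n \<Longrightarrow> A $$ (i, j) \<in> \<int>"
    and det_unit: "det A \<in> {-1, 1}"
    and "i < n" "j < n"
  shows "B $$ (i, j) \<in> \<int>"
proof -
  have "adj_mat A = adj_mat A * (A * B)"
    using adj_mat[OF A] AB by simp
  also have "\<dots> = (adj_mat A * A) * B"
    using adj_mat(1)[OF A] A B by simp
  also have "\<dots> = det A \<cdot>\<^sub>m B"
    using adj_mat(3)[OF A] mult_smult_assoc_mat[OF one_carrier_mat B] B by simp
  finally have "adj_mat A $$ (i, j) = det A * B $$ (i, j)"
    using B \<open>i < n\<close> \<open>j < n\<close> by simp
  moreover have "adj_mat A $$ (i, j) \<in> \<int>"
    using A A_Ints \<open>i < n\<close> \<open>j < n\<close> by (intro Ints_adj_mat) auto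
  ultimately show ?thesis
    using det_unit by (auto simp flip: minus_mult_left)
qed

lemma is_inverse_on_card_eq:
  assumes "finite R" "finite C" "is_inverse_on R C M Minv"
  shows "card R = card C"
proof -
  have "real (card R) = (\<Sum>r\<in>R. \<Sum>k\<in>C. M r k * Minv k r)"
    using assms(3) unfolding is_inverse_on_def by simp
  also have "\<dots> = (\<Sum>k\<in>C. \<Sum>r\<in>R. Minv k r * M r k)"
    by (subst sum.swap) (simp add: mult.commute)
  also have "\<dots> = real (card C)"
    using assms(3) unfolding is_inverse_on_def by simp
  finally show ?thesis by simp
qed

lemma is_inverse_on_mat:
  assumes "is_inverse_on R C M Minv"
    and rs: "distinct rs" "set rs = R" and cs: "distinct cs" "set cs = C"
    and len: "length rs = n" "length cs = n"
  shows "mat n n (\<lambda>(a, b). M (rs ! a) (cs ! b)) * mat n n (\<lambda>(a, b). Minv (cs ! a) (rs ! b)) = 1\<^sub>m n"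
proof (rule eq_matI)
  fix a b assume "a < dim_row (1\<^sub>m n :: real mat)" "b < dim_col (1\<^sub>m n :: real mat)"
  then have ab: "a < n" "b < n" by auto
  have "(\<Sum>k<n. M (rs ! a) (cs ! k) * Minv (cs ! k) (rs ! b)) = (\<Sum>k\<in>C. M (rs ! a) k * Minv k (rs ! b))"
    using sum.reindex_bij_betw[OF bij_betw_nth[OF cs(1) refl cs(2)[symmetric]], of "\<lambda>k. M (rs ! a) k * Minv k (rs ! b)"]
    by (simp add: len)
  also have "\<dots> = (if rs ! a = rs ! b then 1 else 0)"
    using assms(1) ab rs len unfolding is_inverse_on_def by auto
  also have "\<dots> = (if a = b then 1 else 0)"
    using ab rs len by (simp add: nth_eq_iff_index_eq)
  finally show "(mat n n (\<lambda>(a, b). M (rs ! a) (cs ! b)) * mat n n (\<lambda>(a, b). Minv (cs ! a) (rs ! b))) $$ (a, b)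
      = 1\<^sub>m n $$ (a, b)"
    using ab by (simp add: scalar_prod_def atLeast0LessThan)
qed auto

lemma Ints_is_inverse_on:
  assumes "finite R" "finite C" "C \<subseteq> N"
    and Minv: "is_inverse_on R C M Minv"
    and TU: "totally_unimodular_on R N M"
    and M_Ints: "\<forall>r\<in>R. \<forall>k\<in>N. M r k \<in> \<int>"
    and "k \<in> C" "r \<in> R"
  shows "Minv k r \<in> \<int>"
proof -
  obtain rs where rs: "distinct rs" "set rs = R" using finite_distinct_list[OF \<open>finite R\<close>] by blast
  obtain cs where cs: "distinct cs" "set cs = C" using finite_distinct_list[OF \<open>finite C\<close>] by blast
  define n where "n = length rs"
  have len: "length rs = n" "length cs = n"
    using is_inverse_on_card_eq[OF \<open>finite R\<close> \<open>finite C\<close> Minv] rs cs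
    by (auto simp: n_def distinct_card[symmetric])
  define A where "A = mat n n (\<lambda>(a, b). M (rs ! a) (cs ! b))"
  define B where "B = mat n n (\<lambda>(a, b). Minv (cs ! a) (rs ! b))"
  have A: "A \<in> carrier_mat n n" and B: "B \<in> carrier_mat n n"
    unfolding A_def B_def by auto
  have AB: "A * B = 1\<^sub>m n"
    unfolding A_def B_def using is_inverse_on_mat[OF Minv rs cs len] .
  have "det A * det B = 1"
    using det_mult[OF A B] AB by simp
  moreover have "det A \<in> {-1, 0, 1}"
    using TU rs cs len \<open>C \<subseteq> N\<close> unfolding totally_unimodular_on_def A_def by auto
  ultimately have "det A \<in> {-1, 1}" by auto
  moreover have "A $$ (a, b) \<in> \<int>" if "a < n" "b < n" for a b
    using that nth_mem[of a rs] nth_mem[of b cs] rs cs len \<open>C \<subseteq> N\<close> M_Ints unfolding A_def by auto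
  moreover obtain a b where "a < n" "cs ! a = k" "b < n" "rs ! b = r"
    using \<open>k \<in> C\<close> \<open>r \<in> R\<close> rs cs len by (metis in_set_conv_nth)
  ultimately show ?thesis
    using Ints_inverse_mat[OF A B AB] unfolding B_def by force
qed

lemma sum_mult_sum_swap:
  fixes g :: "'a \<Rightarrow> 'c::semiring_0"
  shows "(\<Sum>j\<in>J. g j * (\<Sum>k\<in>K. T j k * y k)) = (\<Sum>k\<in>K. (\<Sum>j\<in>J. g j * T j k) * y k)"
proof -
  have "(\<Sum>j\<in>J. g j * (\<Sum>k\<in>K. T j k * y k)) = (\<Sum>j\<in>J. \<Sum>k\<in>K. g j * T j k * y k)"
    by (simp add: sum_distrib_left mult.assoc)
  also have "\<dots> = (\<Sum>k\<in>K. \<Sum>j\<in>J. g j * T j k * y k)"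
    by (rule sum.swap)
  finally show ?thesis
    by (simp add: sum_distrib_right)
qed

lemma is_inverse_on_inverse_on:
  assumes "invertible_on R C M"
  shows "is_inverse_on R C M (inverse_on R C M)"
  using assms unfolding invertible_on_def inverse_on_def by (rule someI_ex)

lemma is_inverse_on_solve_iff:
  assumes "finite R" "finite C" and Minv: "is_inverse_on R C M Minv"
  shows "(\<forall>r\<in>R. (\<Sum>k\<in>C. M r k * x k) = f r) \<longleftrightarrow> (\<forall>k\<in>C. x k = (\<Sum>r\<in>R. Minv k r * f r))"
proof
  assume eq: "\<forall>r\<in>R. (\<Sum>k\<in>C. M r k * x k) = f r"
  show "\<forall>k\<in>C. x k = (\<Sum>r\<in>R. Minv k r * f r)"
  proof
    fix k assume "k \<in> C"
    have "(\<Sum>r\<in>R. Minv k r * f r) = (\<Sum>r\<in>R. Minv k r * (\<Sum>k'\<in>C. M r k' * x k'))"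
      using eq by simp
    also have "\<dots> = (\<Sum>k'\<in>C. (\<Sum>r\<in>R. Minv k r * M r k') * x k')"
      by (rule sum_mult_sum_swap)
    also have "\<dots> = (\<Sum>k'\<in>C. if k = k' then x k' else 0)"
      using Minv \<open>k \<in> C\<close> unfolding is_inverse_on_def by (intro sum.cong) auto
    also have "\<dots> = x k"
      using \<open>finite C\<close> \<open>k \<in> C\<close> by simp
    finally show "x k = (\<Sum>r\<in>R. Minv k r * f r)" ..
  qed
next
  assume sol: "\<forall>k\<in>C. x k = (\<Sum>r\<in>R. Minv k r * f r)"
  show "\<forall>r\<in>R. (\<Sum>k\<in>C. M r k * x k) = f r"
  proof
    fix r assume "r \<in> R"
    have "(\<Sum>k\<in>C. M r k * x k) = (\<Sum>k\<in>C. M r k * (\<Sum>r'\<in>R. Minv k r' * f r'))"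
      using sol by simp
    also have "\<dots> = (\<Sum>r'\<in>R. (\<Sum>k\<in>C. M r k * Minv k r') * f r')"
      by (rule sum_mult_sum_swap)
    also have "\<dots> = (\<Sum>r'\<in>R. if r = r' then f r' else 0)"
      using Minv \<open>r \<in> R\<close> unfolding is_inverse_on_def by (intro sum.cong) auto
    also have "\<dots> = f r"
      using \<open>finite R\<close> \<open>r \<in> R\<close> by simp
    finally show "(\<Sum>k\<in>C. M r k * x k) = f r" .
  qed
qed

lemma red_equations_iff:
  assumes "finite J" "finite I" "finite K" "I \<inter> K = {}" "invertible_on J I B"
  shows "(\<forall>j\<in>J. (\<Sum>i\<in>I \<union> K. B j i * x i) = d j)
           \<longleftrightarrow> (\<forall>i\<in>I. x i = red_s J I B d i + (\<Sum>k\<in>K. red_S J I B i k * x k))"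
proof -
  let ?Binv = "inverse_on J I B"
  have "(\<forall>j\<in>J. (\<Sum>i\<in>I \<union> K. B j i * x i) = d j)
          \<longleftrightarrow> (\<forall>j\<in>J. (\<Sum>i\<in>I. B j i * x i) = d j - (\<Sum>k\<in>K. B j k * x k))"
    using assms by (auto simp: sum.union_disjoint algebra_simps)
  also have "\<dots> \<longleftrightarrow> (\<forall>i\<in>I. x i = (\<Sum>j\<in>J. ?Binv i j * (d j - (\<Sum>k\<in>K. B j k * x k))))"
    using assms by (intro is_inverse_on_solve_iff is_inverse_on_inverse_on)
  also have "(\<lambda>i. (\<Sum>j\<in>J. ?Binv i j * (d j - (\<Sum>k\<in>K. B j k * x k))))
               = (\<lambda>i. red_s J I B d i + (\<Sum>k\<in>K. red_S J I B i k * x k))"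
    unfolding red_s_def red_S_def
    by (simp add: right_diff_distrib sum_subtractf sum_mult_sum_swap sum_negf)
  finally show ?thesis by simp
qed

lemma sum_mult_lift:
  assumes "finite I" "finite K" "I \<inter> K = {}"
  shows "(\<Sum>i\<in>I \<union> K. a i * lift I K s S y i)
           = (\<Sum>i\<in>I. a i * s i) + (\<Sum>k\<in>K. ((\<Sum>i\<in>I. a i * S i k) + a k) * y k)"
proof -
  have "(\<Sum>i\<in>I \<union> K. a i * lift I K s S y i)
          = (\<Sum>i\<in>I. a i * (s i + (\<Sum>k\<in>K. S i k * y k))) + (\<Sum>k\<in>K. a k * y k)"
    using assms by (auto simp: sum.union_disjoint lift_def intro!: sum.cong)
  then show ?thesis
    by (simp add: distrib_left distrib_right sum.distrib sum_mult_sum_swap)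
qed

lemma sum_red_A_lift:
  assumes "finite I" "finite K" "I \<inter> K = {}"
  shows "(\<Sum>k\<in>K. red_A I S A r k * y k) - red_b I s A b r
           = (\<Sum>i\<in>I \<union> K. A r i * lift I K s S y i) - b r"
  unfolding red_A_def red_b_def sum_mult_lift[OF assms] by simp

lemma quadratic_form_lift:
  assumes fin: "finite I" "finite K" and disj: "I \<inter> K = {}"
    and Qx: "\<And>i. (\<Sum>j\<in>I \<union> K. Q i j * lift I K s S y j) = u i + (\<Sum>l\<in>K. V i l * y l)"
  shows "(\<Sum>i\<in>I \<union> K. \<Sum>j\<in>I \<union> K. lift I K s S y i * Q i j * lift I K s S y j)
           = (\<Sum>i\<in>I. u i * s i) + (\<Sum>k\<in>K. ((\<Sum>i\<in>I. s i * V i k + u i * S i k) + u k) * y k)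
             + (\<Sum>k\<in>K. \<Sum>l\<in>K. y k * ((\<Sum>i\<in>I. S i k * V i l) + V k l) * y l)"
proof -
  let ?x = "lift I K s S y"
  define W where "W i = (\<Sum>l\<in>K. V i l * y l)" for i
  have Ws: "(\<Sum>i\<in>I. W i * s i) = (\<Sum>l\<in>K. (\<Sum>i\<in>I. s i * V i l) * y l)"
    unfolding W_def by (subst sum_mult_sum_swap[symmetric]) (simp add: mult.commute)
  have WS: "(\<Sum>i\<in>I. W i * S i k) = (\<Sum>l\<in>K. (\<Sum>i\<in>I. S i k * V i l) * y l)" for k
    unfolding W_def by (subst sum_mult_sum_swap[symmetric]) (simp add: mult.commute)
  have "(\<Sum>i\<in>I \<union> K. \<Sum>j\<in>I \<union> K. ?x i * Q i j * ?x j)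
          = (\<Sum>i\<in>I \<union> K. ?x i * (\<Sum>j\<in>I \<union> K. Q i j * ?x j))"
    by (simp add: sum_distrib_left mult.assoc)
  also have "\<dots> = (\<Sum>i\<in>I \<union> K. (u i + W i) * ?x i)"
    unfolding Qx W_def by (simp add: mult.commute)
  also have "\<dots> = (\<Sum>i\<in>I. (u i + W i) * s i)
      + (\<Sum>k\<in>K. ((\<Sum>i\<in>I. (u i + W i) * S i k) + (u k + W k)) * y k)"
    by (rule sum_mult_lift[OF fin disj])
  also have "\<dots> = (\<Sum>i\<in>I. u i * s i) + (\<Sum>k\<in>K. ((\<Sum>i\<in>I. s i * V i k + u i * S i k) + u k) * y k)
      + (\<Sum>k\<in>K. \<Sum>l\<in>K. y k * ((\<Sum>i\<in>I. S i k * V i l) + V k l) * y l)"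
    by (simp only: distrib_right sum.distrib Ws WS)
      (simp add: W_def sum_distrib_left sum_distrib_right sum.distrib algebra_simps)
  finally show ?thesis .
qed

lemma objP_lift:
  assumes fin: "finite I" "finite K" and disj: "I \<inter> K = {}"
    and Q_sym: "\<forall>i\<in>I \<union> K. \<forall>j\<in>I \<union> K. Q i j = Q j i"
  shows "objP (I \<union> K) Q c (lift I K s S y)
           = objP' K (red_Q I S Q) (red_c I s S Q c) (red_c0 I s Q c) y"
proof -
  define u where "u i = (\<Sum>j\<in>I. Q i j * s j)" for i
  define V where "V i l = (\<Sum>j\<in>I. Q i j * S j l) + Q i l" for i l
  have quad: "(\<Sum>i\<in>I \<union> K. \<Sum>j\<in>I \<union> K. lift I K s S y i * Q i j * lift I K s S y j)
      = (\<Sum>i\<in>I. u i * s i) + (\<Sum>k\<in>K. ((\<Sum>i\<in>I. s i * V i k + u i * S i k) + u k) * y k)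
        + (\<Sum>k\<in>K. \<Sum>l\<in>K. y k * ((\<Sum>i\<in>I. S i k * V i l) + V k l) * y l)"
    by (rule quadratic_form_lift[OF fin disj])
      (unfold u_def V_def, rule sum_mult_lift[OF fin disj])
  have lin: "(\<Sum>i\<in>I \<union> K. c i * lift I K s S y i)
      = (\<Sum>i\<in>I. c i * s i) + (\<Sum>k\<in>K. ((\<Sum>i\<in>I. c i * S i k) + c k) * y k)"
    by (rule sum_mult_lift[OF fin disj])
  have quad_coeff: "(\<Sum>i\<in>I. S i k * V i l) + V k l = red_Q I S Q k l" if "k \<in> K" for k l
  proof -
    have "(\<Sum>j\<in>I. Q k j * S j l) = (\<Sum>j\<in>I. Q j k * S j l)"
      using Q_sym that by (intro sum.cong) auto
    then show ?thesis
      unfolding V_def red_Q_def by (simp add: distrib_left sum.distrib sum_distrib_left mult.assoc)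
  qed
  have lin_coeff: "(\<Sum>i\<in>I. s i * V i k + u i * S i k) + u k + ((\<Sum>i\<in>I. c i * S i k) + c k)
      = red_c I s S Q c k" if "k \<in> K" for k
  proof -
    have "(\<Sum>i\<in>I. \<Sum>j\<in>I. s i * Q i j * S j k) = (\<Sum>j\<in>I. \<Sum>i\<in>I. S j k * Q j i * s i)"
      using Q_sym by (subst sum.swap) (auto simp: mult_ac intro!: sum.cong)
    moreover have "u k = (\<Sum>i\<in>I. Q i k * s i)"
      unfolding u_def using Q_sym that by (intro sum.cong) auto
    ultimately show ?thesis
      unfolding V_def u_def red_c_def
      by (simp add: distrib_left sum.distrib sum_distrib_left sum_distrib_right mult_ac)
  qed
  have const: "(\<Sum>i\<in>I. u i * s i) + (\<Sum>i\<in>I. c i * s i) = red_c0 I s Q c"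
    unfolding u_def red_c0_def by (simp add: sum_distrib_left sum_distrib_right mult_ac)
  have "objP (I \<union> K) Q c (lift I K s S y)
      = (\<Sum>k\<in>K. \<Sum>l\<in>K. y k * ((\<Sum>i\<in>I. S i k * V i l) + V k l) * y l)
        + (\<Sum>k\<in>K. ((\<Sum>i\<in>I. s i * V i k + u i * S i k) + u k + ((\<Sum>i\<in>I. c i * S i k) + c k)) * y k)
        + ((\<Sum>i\<in>I. u i * s i) + (\<Sum>i\<in>I. c i * s i))"
    unfolding objP_def quad lin by (simp add: distrib_right sum.distrib)
  also have "\<dots> = objP' K (red_Q I S Q) (red_c I s S Q c) (red_c0 I s Q c) y"
    unfolding objP'_def const using quad_coeff lin_coeff by simp
  finally show ?thesis .
qed

locale binary_program_elimination =
  fixes N :: "'c set" and M1 :: "'r1 set" and M2 :: "'r2 set"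
    and A :: "'r1 \<Rightarrow> 'c \<Rightarrow> real" and b :: "'r1 \<Rightarrow> real"
    and B :: "'r2 \<Rightarrow> 'c \<Rightarrow> real" and d :: "'r2 \<Rightarrow> real"
    and J :: "'r2 set" and I :: "'c set"
  assumes finite_N: "finite N" and finite_M2: "finite M2"
    and J_subset: "J \<subseteq> M2" and I_subset: "I \<subseteq> N"
    and B_Ints: "\<forall>j\<in>J. \<forall>i\<in>N. B j i \<in> \<int>" and d_Ints: "\<forall>j\<in>J. d j \<in> \<int>"
    and TU: "totally_unimodular_on J N B" and invertible: "invertible_on J I B"
begin

abbreviation Ib :: "'c set" where "Ib \<equiv> N - I"
abbreviation s :: "'c \<Rightarrow> real" where "s \<equiv> red_s J I B d"
abbreviation S :: "'c \<Rightarrow> 'c \<Rightarrow> real" where "S \<equiv> red_S J I B"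
abbreviation L :: "('c \<Rightarrow> real) \<Rightarrow> 'c \<Rightarrow> real" where "L \<equiv> lift I Ib s S"
abbreviation FP :: "('c \<Rightarrow> real) set" where "FP \<equiv> feasP N M1 M2 A b B d"
abbreviation FP' :: "('c \<Rightarrow> real) set" where
  "FP' \<equiv> feasP' Ib I M1 (M2 - J) (red_A I S A) (red_b I s A b) (red_A I S B) (red_b I s B d) S s"

lemma finite_I: "finite I" and finite_Ib: "finite Ib"
  and Un_Ib: "I \<union> Ib = N" and disjoint: "I \<inter> Ib = {}"
  using finite_N I_subset by (auto intro: finite_subset)

lemma J_equations_iff:
  "(\<forall>j\<in>J. (\<Sum>i\<in>N. B j i * x i) = d j) \<longleftrightarrow> (\<forall>i\<in>I. x i = s i + (\<Sum>k\<in>Ib. S i k * x k))"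
  using red_equations_iff[OF finite_subset[OF J_subset finite_M2] finite_I finite_Ib disjoint invertible]
  unfolding Un_Ib .

lemma s_Ints: "i \<in> I \<Longrightarrow> s i \<in> \<int>"
  and S_Ints: "i \<in> I \<Longrightarrow> k \<in> N \<Longrightarrow> S i k \<in> \<int>"
  using Ints_is_inverse_on[OF finite_subset[OF J_subset finite_M2] finite_I I_subset
      is_inverse_on_inverse_on[OF invertible] TU B_Ints] B_Ints d_Ints
  unfolding red_s_def red_S_def by (auto intro!: Ints_mult Ints_minus)

lemma sum_red_A_L:
  "(\<Sum>k\<in>Ib. red_A I S C r k * y k) - red_b I s C e r = (\<Sum>i\<in>N. C r i * L y i) - e r"
  using sum_red_A_lift[OF finite_I finite_Ib disjoint] unfolding Un_Ib .

lemma L_mem_FP: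
  assumes "y \<in> FP'"
  shows "L y \<in> FP"
proof -
  from assms have y01: "\<forall>k\<in>Ib. y k \<in> {0, 1}" and y0: "\<forall>k. k \<notin> Ib \<longrightarrow> y k = 0"
    and yA: "\<forall>r\<in>M1. (\<Sum>k\<in>Ib. red_A I S A r k * y k) \<ge> red_b I s A b r"
    and yB: "\<forall>r\<in>M2 - J. (\<Sum>k\<in>Ib. red_A I S B r k * y k) = red_b I s B d r"
    and ybounds: "\<forall>i\<in>I. - s i \<le> (\<Sum>k\<in>Ib. S i k * y k) \<and> (\<Sum>k\<in>Ib. S i k * y k) \<le> 1 - s i"
    unfolding feasP'_def by auto
  have L01: "L y i \<in> {0, 1}" if "i \<in> N" for i
  proof (cases "i \<in> I")
    case True
    have "y k \<in> \<int>" if "k \<in> Ib" for k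
      using y01 that by (metis Ints_0 Ints_1 empty_iff insert_iff)
    then have "L y i \<in> \<int>"
      using True s_Ints S_Ints by (auto simp: lift_def)
    moreover have "0 \<le> L y i" "L y i \<le> 1"
      using True ybounds by (auto simp: lift_def)
    ultimately show ?thesis by (auto elim!: Ints_cases)
  qed (use that y01 in \<open>auto simp: lift_def\<close>)
  have "(\<Sum>i\<in>N. A r i * L y i) \<ge> b r" if "r \<in> M1" for r
    using yA that sum_red_A_L[of A r y b] by auto
  moreover have "(\<Sum>i\<in>N. B r i * L y i) = d r" if "r \<in> M2" for r
  proof (cases "r \<in> J")
    case True
    have "\<forall>j\<in>J. (\<Sum>i\<in>N. B j i * L y i) = d j"
      unfolding J_equations_iff by (simp add: lift_def)
    with True show ?thesis by blast
  next
    case False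
    with yB that sum_red_A_L[of B r y d] show ?thesis by auto
  qed
  ultimately show ?thesis
    using L01 y0 I_subset
    unfolding feasP_def by (auto simp: lift_def)
qed

lemma restriction_mem_FP':
  assumes "x \<in> FP"
  defines "y \<equiv> \<lambda>k. if k \<in> Ib then x k else 0"
  shows "y \<in> FP'" and "L y = x"
proof -
  from assms have x01: "\<forall>i\<in>N. x i \<in> {0, 1}" and x0: "\<forall>i. i \<notin> N \<longrightarrow> x i = 0"
    and xA: "\<forall>r\<in>M1. (\<Sum>i\<in>N. A r i * x i) \<ge> b r"
    and xB: "\<forall>r\<in>M2. (\<Sum>i\<in>N. B r i * x i) = d r"
    unfolding feasP_def by auto
  have "\<forall>i\<in>I. x i = s i + (\<Sum>k\<in>Ib. S i k * x k)"
    using xB J_subset by (simp add: J_equations_iff[symmetric] subset_iff)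
  then show Ly: "L y = x"
    using x0 by (auto simp: lift_def y_def)
  have "(\<Sum>k\<in>Ib. red_A I S A r k * y k) \<ge> red_b I s A b r" if "r \<in> M1" for r
    using xA[rule_format, OF that] sum_red_A_L[of A r y b] by (simp add: Ly)
  moreover have "(\<Sum>k\<in>Ib. red_A I S B r k * y k) = red_b I s B d r" if "r \<in> M2 - J" for r
    using xB that sum_red_A_L[of B r y d] by (simp add: Ly)
  moreover have "\<forall>i\<in>I. - s i \<le> (\<Sum>k\<in>Ib. S i k * y k) \<and> (\<Sum>k\<in>Ib. S i k * y k) \<le> 1 - s i"
  proof
    fix i assume "i \<in> I"
    then have "x i = s i + (\<Sum>k\<in>Ib. S i k * y k)" and "x i \<in> {0, 1}"
      using Ly x01 I_subset by (auto simp: lift_def)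
    then show "- s i \<le> (\<Sum>k\<in>Ib. S i k * y k) \<and> (\<Sum>k\<in>Ib. S i k * y k) \<le> 1 - s i"
      by auto
  qed
  ultimately show "y \<in> FP'"
    using x01 unfolding feasP'_def y_def by auto
qed

lemma bij_betw_L: "bij_betw L FP' FP"
proof (rule bij_betw_byWitness[where f' = "\<lambda>x k. if k \<in> Ib then x k else 0"])
  show "\<forall>y\<in>FP'. (\<lambda>k. if k \<in> Ib then L y k else 0) = y"
    by (auto simp: feasP'_def lift_def)
qed (use L_mem_FP restriction_mem_FP' in auto)

end

theorem mainTheorem8:
  fixes N :: "'c set" and M1 :: "'r1 set" and M2 :: "'r2 set"
    and Q :: "'c \<Rightarrow> 'c \<Rightarrow> real" and c :: "'c \<Rightarrow> real"
    and A :: "'r1 \<Rightarrow> 'c \<Rightarrow> real" and b :: "'r1 \<Rightarrow> real"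
    and B :: "'r2 \<Rightarrow> 'c \<Rightarrow> real" and d :: "'r2 \<Rightarrow> real"
    and J :: "'r2 set" and I :: "'c set"
  assumes finN: "finite N" and finM1: "finite M1" and finM2: "finite M2"
    and Qsym: "\<forall>i\<in>N. \<forall>j\<in>N. Q i j = Q j i"
    and JM2: "J \<subseteq> M2" and IN: "I \<subseteq> N"
    and Bint: "\<forall>j\<in>J. \<forall>i\<in>N. B j i \<in> \<int>"
    and dint: "\<forall>j\<in>J. d j \<in> \<int>"
    and TU: "totally_unimodular_on J N B"
    and inv: "invertible_on J I B"
  shows "let Ib = N - I; Jb = M2 - J;
             s = red_s J I B d; S = red_S J I B;
             Q' = red_Q I S Q; A' = red_A I S A; B' = red_A I S B;
             b' = red_b I s A b; c' = red_c I s S Q c; d' = red_b I s B d;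
             c0' = red_c0 I s Q c;
             FP = feasP N M1 M2 A b B d; FP' = feasP' Ib I M1 Jb A' b' B' d' S s;
             L = lift I Ib s S
         in bij_betw L FP' FP
            \<and> (\<forall>y\<in>FP'. objP N Q c (L y) = objP' Ib Q' c' c0' y)
            \<and> (FP' \<noteq> {} \<longrightarrow> Min (objP N Q c ` FP) = Min (objP' Ib Q' c' c0' ` FP'))
            \<and> (\<forall>y\<in>FP'. (\<forall>y'\<in>FP'. objP' Ib Q' c' c0' y \<le> objP' Ib Q' c' c0' y')
                        \<longleftrightarrow> (\<forall>x\<in>FP. objP N Q c (L y) \<le> objP N Q c x))"
proof -
  interpret binary_program_elimination N M1 M2 A b B d J I
    by unfold_locales (use assms in auto)
  let ?f = "objP N Q c" and ?g = "objP' Ib (red_Q I S Q) (red_c I s S Q c) (red_c0 I s Q c)"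
  have obj: "\<forall>y\<in>FP'. ?f (L y) = ?g y"
    using objP_lift[OF finite_I finite_Ib disjoint, of Q c s S] Qsym unfolding Un_Ib by simp
  have FP_eq: "FP = L ` FP'"
    using bij_betw_L by (simp add: bij_betw_def)
  have "?f ` FP = ?g ` FP'"
    unfolding FP_eq image_image using obj by (intro image_cong) auto
  then show ?thesis
    unfolding Let_def using bij_betw_L obj FP_eq by auto
qed

end
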